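(* Let $\mathcal M=(a_{i,j})_{i,j\in[n]}$ be a real matrix with $0\le a_{i,j}\le 1$ for all $i,j\in[n]$ such that each row sum $s_i=\sum_{j\in[n]}a_{i,j}$ and each column sum $t_j=\sum_{i\in[n]}a_{i,j}$ is a (nonnegative) integer. Let $X=\sum_{i\in[n]}s_i$. Then there exists a matrix $\mathcal N=(b_{i,j})_{i,j\in[n]}$ with $b_{i,j}\in\{0,1\}$ for all $i,j$, $\sum_{j\in[n]}b_{i,j}=s_i$ for all $i\in[n]$, $\sum_{i\in[n]}b_{i,j}=t_j$ for all $j\in[n]$, and $$\sum_{i\in[n]}\sum_{j\in[n]}a_{i,j}\,b_{i,j}\ \ge\ \frac{X^2}{n^2}.$$
   Context: $[n]=\{1,\dots,n\}$ for a positive integer $n$. *)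

theory Defs
  imports Complex_Main
begin

end

theory Submission
  imports Defs "HOL-Analysis.Convex"
begin

text \<open>
  By the inequality between the arithmetic and the quadratic mean, \<open>X\<^sup>2/n\<^sup>2 \<le> \<Sum> a\<^sub>i\<^sub>j\<^sup>2\<close>.
  So it suffices to round \<open>a\<close> to a 0/1 matrix with the same margins without decreasing the
  linear weight \<open>M \<mapsto> \<Sum> a\<^sub>i\<^sub>j M\<^sub>i\<^sub>j\<close>. In a matrix with entries in \<open>[0,1]\<close> and integral margins,
  every row and column containing a fractional entry contains at least two. Hence the
  fractional entries outnumber the independent margin conditions on them, and some nonzero
  perturbation \<open>D\<close> supported on them has zero margins. Moving along \<open>D\<close> or \<open>-D\<close>, whichever
  does not decrease the weight, until some entry reaches 0 or 1 removes a fractional entry.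
\<close>

lemma homogeneous_system_nontrivial_solution:
  fixes c :: "'e \<Rightarrow> 'v \<Rightarrow> real"
  assumes "finite E" and "finite V" and "card E < card V"
  shows "\<exists>x. (\<forall>v. v \<notin> V \<longrightarrow> x v = 0) \<and> (\<exists>v\<in>V. x v \<noteq> 0)
           \<and> (\<forall>e\<in>E. (\<Sum>v\<in>V. c e v * x v) = 0)"
  using assms
proof (induction E arbitrary: V c rule: finite_induct)
  case empty
  then obtain v where "v \<in> V"
    by fastforce
  then show ?case
    by (intro exI[of _ "\<lambda>u. of_bool (u = v)"]) auto
next
  case (insert e E)
  show ?case
  proof (cases "\<forall>v\<in>V. c e v = 0")
    case True
    with insert show ?thesis
      by simp
  next
    case False
    then obtain v0 where v0: "v0 \<in> V" "c e v0 \<noteq> 0"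
      by blast
    \<comment> \<open>Gaussian elimination: use equation \<open>e\<close> to eliminate the unknown \<open>v0\<close>.\<close>
    define c' where "c' g u = c g u - c g v0 / c e v0 * c e u" for g u
    have "card E < card (V - {v0})"
      using insert v0 by simp
    then obtain y where y0: "\<forall>v. v \<notin> V - {v0} \<longrightarrow> y v = 0"
      and y_nz: "\<exists>v\<in>V - {v0}. y v \<noteq> 0"
      and y_sol: "\<forall>g\<in>E. (\<Sum>u\<in>V - {v0}. c' g u * y u) = 0"
      using insert.IH[of "V - {v0}" c'] insert.prems(1) by auto
    define x where "x = y(v0 := - (\<Sum>u\<in>V - {v0}. c e u * y u) / c e v0)"
    have x_v0: "x v0 = - (\<Sum>u\<in>V - {v0}. c e u * y u) / c e v0"
      by (simp add: x_def)
    have sum_x: "(\<Sum>u\<in>V. c g u * x u) = c g v0 * x v0 + (\<Sum>u\<in>V - {v0}. c g u * y u)" for g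
      using sum.remove[OF insert.prems(1) v0(1), of "\<lambda>u. c g u * x u"]
      by (simp add: x_def)
    have "(\<Sum>u\<in>V. c g u * x u) = 0" if "g \<in> E" for g
    proof -
      have "(\<Sum>u\<in>V - {v0}. c' g u * y u)
          = (\<Sum>u\<in>V - {v0}. c g u * y u) - c g v0 / c e v0 * (\<Sum>u\<in>V - {v0}. c e u * y u)"
        by (simp add: c'_def algebra_simps sum_subtractf sum_distrib_left)
      with y_sol that v0(2) show ?thesis
        by (simp add: sum_x x_v0)
    qed
    moreover have "(\<Sum>u\<in>V. c e u * x u) = 0"
      using v0(2) by (simp add: sum_x x_v0)
    ultimately show ?thesis
      using y0 y_nz v0(1) by (intro exI[of _ x]) (auto simp: x_def)
  qed
qed

lemma two_mult_card_image_le: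
  assumes "finite S" and "\<And>p. p \<in> S \<Longrightarrow> \<exists>q\<in>S. q \<noteq> p \<and> g q = g p"
  shows "2 * card (g ` S) \<le> card S"
proof -
  have "2 \<le> card {p \<in> S. g p = y}" if y: "y \<in> g ` S" for y
  proof -
    obtain p where p: "p \<in> S" "g p = y"
      using y by blast
    then obtain q where q: "q \<in> S" "q \<noteq> p" "g q = y"
      using assms(2) by metis
    have "card {p, q} \<le> card {p \<in> S. g p = y}"
      by (rule card_mono) (use \<open>finite S\<close> p q in auto)
    with q(2) show ?thesis
      by simp
  qed
  then have "2 * card (g ` S) \<le> (\<Sum>y\<in>g ` S. card {p \<in> S. g p = y})"
    using sum_mono[of "g ` S" "\<lambda>_. 2" "\<lambda>y. card {p \<in> S. g p = y}"] by simp
  also have "\<dots> = card S"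
    using sum.group[OF \<open>finite S\<close> finite_imageI[OF \<open>finite S\<close>] subset_refl,
        where g = g and h = "\<lambda>_. 1::nat"]
    by simp
  finally show ?thesis .
qed

lemma sum_support_eq_double_sum:
  fixes x :: "'a \<times> 'b \<Rightarrow> real"
  assumes "finite I" and "finite J" and "S \<subseteq> I \<times> J" and "\<forall>p. p \<notin> S \<longrightarrow> x p = 0"
  shows "(\<Sum>p\<in>S. g p * x p) = (\<Sum>i\<in>I. \<Sum>j\<in>J. g (i, j) * x (i, j))"
proof -
  have "(\<Sum>p\<in>S. g p * x p) = (\<Sum>p\<in>I \<times> J. g p * x p)"
    by (rule sum.mono_neutral_left) (use assms in auto)
  then show ?thesis
    by (simp add: sum.cartesian_product)
qed

lemma row_sum_zero_if_other_margins_zero: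
  fixes D :: "'a \<Rightarrow> 'b \<Rightarrow> real"
  assumes "finite I" and "i0 \<in> I"
    and "\<forall>i\<in>I - {i0}. (\<Sum>j\<in>J. D i j) = 0" and "\<forall>j\<in>J. (\<Sum>i\<in>I. D i j) = 0"
  shows "(\<Sum>j\<in>J. D i0 j) = 0"
proof -
  have "(\<Sum>j\<in>J. D i0 j) = (\<Sum>i\<in>I. \<Sum>j\<in>J. D i j)"
    using sum.remove[OF assms(1,2), of "\<lambda>i. \<Sum>j\<in>J. D i j"] assms(3) by simp
  also have "\<dots> = (\<Sum>j\<in>J. \<Sum>i\<in>I. D i j)"
    by (rule sum.swap)
  finally show ?thesis
    using assms(4) by simp
qed

lemma card_fst_image_plus_card_snd_image_le:
  fixes S :: "('a \<times> 'b) set"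
  assumes "finite S"
    and row_two: "\<And>i j. (i, j) \<in> S \<Longrightarrow> \<exists>j'. j' \<noteq> j \<and> (i, j') \<in> S"
    and col_two: "\<And>i j. (i, j) \<in> S \<Longrightarrow> \<exists>i'. i' \<noteq> i \<and> (i', j) \<in> S"
  shows "card (fst ` S) + card (snd ` S) \<le> card S"
proof -
  have "2 * card (fst ` S) \<le> card S"
    by (rule two_mult_card_image_le[OF \<open>finite S\<close>]) (use row_two in fastforce)
  moreover have "2 * card (snd ` S) \<le> card S"
    by (rule two_mult_card_image_le[OF \<open>finite S\<close>]) (use col_two in fastforce)
  ultimately show ?thesis
    by linarith
qed

lemma exists_zero_margins_except_one_row:
  fixes S :: "('a \<times> 'b) set"
  assumes "finite I" and "finite J" and "S \<subseteq> I \<times> J" and r0: "r0 \<in> fst ` S"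
    and card_S: "card (fst ` S) + card (snd ` S) \<le> card S"
  shows "\<exists>D :: 'a \<Rightarrow> 'b \<Rightarrow> real. (\<forall>i j. (i, j) \<notin> S \<longrightarrow> D i j = 0) \<and> (\<exists>(i, j)\<in>S. D i j \<noteq> 0)
           \<and> (\<forall>i\<in>I - {r0}. (\<Sum>j\<in>J. D i j) = 0) \<and> (\<forall>j\<in>J. (\<Sum>i\<in>I. D i j) = 0)"
proof -
  have "finite S"
    using assms(1-3) finite_subset by blast
  define E where "E = Inl ` (fst ` S - {r0}) \<union> Inr ` snd ` S"
  have "card E = card (fst ` S) - 1 + card (snd ` S)"
    unfolding E_def using r0 \<open>finite S\<close>
    by (subst card_Un_disjoint) (auto simp: card_image)
  moreover have "card (fst ` S) > 0"
    using r0 \<open>finite S\<close> card_gt_0_iff by blast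
  ultimately have "card E < card S"
    using card_S by linarith
  define c :: "'a + 'b \<Rightarrow> 'a \<times> 'b \<Rightarrow> real"
    where "c e p = (case e of Inl i \<Rightarrow> of_bool (fst p = i) | Inr j \<Rightarrow> of_bool (snd p = j))" for e p
  obtain x where x0: "\<forall>p. p \<notin> S \<longrightarrow> x p = 0" and x_nz: "\<exists>p\<in>S. x p \<noteq> 0"
    and x_sol: "\<forall>e\<in>E. (\<Sum>p\<in>S. c e p * x p) = 0"
    using homogeneous_system_nontrivial_solution[OF _ \<open>finite S\<close> \<open>card E < card S\<close>, of c]
      \<open>finite S\<close> by (auto simp: E_def)
  have line_sum: "(\<Sum>p\<in>S. c e p * x p) = 0" if "e \<in> Inl ` (I - {r0}) \<union> Inr ` J" for e
  proof (cases "e \<in> E")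
    case False
    with that consider (row) i where "e = Inl i" "i \<notin> fst ` S"
      | (col) j where "e = Inr j" "j \<notin> snd ` S"
      by (auto simp: E_def inj_image_mem_iff)
    then have "c e p = 0" if "p \<in> S" for p
      by cases (use that in \<open>auto simp: c_def\<close>)
    then show ?thesis
      by simp
  qed (use x_sol in blast)
  define D where "D i j = x (i, j)" for i j
  have eq_sum: "(\<Sum>p\<in>S. c e p * x p) = (\<Sum>i\<in>I. \<Sum>j\<in>J. c e (i, j) * D i j)" for e
    unfolding D_def by (rule sum_support_eq_double_sum[OF assms(1-3) x0])
  have "\<forall>j\<in>J. (\<Sum>i\<in>I. D i j) = 0"
  proof
    fix j assume "j \<in> J"
    then have "(\<Sum>i\<in>I. \<Sum>j'\<in>J. of_bool (j' = j) * D i j') = 0"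
      using line_sum[of "Inr j"] unfolding eq_sum by (simp add: c_def)
    with \<open>j \<in> J\<close> \<open>finite J\<close> show "(\<Sum>i\<in>I. D i j) = 0"
      by (simp add: if_distrib cong: if_cong)
  qed
  moreover have "\<forall>i\<in>I - {r0}. (\<Sum>j\<in>J. D i j) = 0"
  proof
    fix i assume "i \<in> I - {r0}"
    then have "(\<Sum>i'\<in>I. \<Sum>j\<in>J. of_bool (i' = i) * D i' j) = 0"
      using line_sum[of "Inl i"] unfolding eq_sum by (simp add: c_def)
    with \<open>i \<in> I - {r0}\<close> \<open>finite I\<close> show "(\<Sum>j\<in>J. D i j) = 0"
      by (simp add: if_distrib sum.delta cong: if_cong flip: sum_distrib_left)
  qed
  moreover have "\<forall>i j. (i, j) \<notin> S \<longrightarrow> D i j = 0" and "\<exists>(i, j)\<in>S. D i j \<noteq> 0"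
    using x0 x_nz by (auto simp: D_def)
  ultimately show ?thesis
    by blast
qed

lemma exists_circulation_on_support:
  fixes S :: "('a \<times> 'b) set"
  assumes "finite I" and "finite J" and "S \<subseteq> I \<times> J" and "S \<noteq> {}"
    and "\<And>i j. (i, j) \<in> S \<Longrightarrow> \<exists>j'. j' \<noteq> j \<and> (i, j') \<in> S"
    and "\<And>i j. (i, j) \<in> S \<Longrightarrow> \<exists>i'. i' \<noteq> i \<and> (i', j) \<in> S"
  shows "\<exists>D :: 'a \<Rightarrow> 'b \<Rightarrow> real. (\<forall>i j. (i, j) \<notin> S \<longrightarrow> D i j = 0) \<and> (\<exists>(i, j)\<in>S. D i j \<noteq> 0)
           \<and> (\<forall>i\<in>I. (\<Sum>j\<in>J. D i j) = 0) \<and> (\<forall>j\<in>J. (\<Sum>i\<in>I. D i j) = 0)"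
proof -
  have "finite S"
    using assms(1-3) finite_subset by blast
  obtain r0 where r0: "r0 \<in> fst ` S"
    using \<open>S \<noteq> {}\<close> by blast
  \<comment> \<open>The row sums and the column sums of \<open>D\<close> have the same total, so the condition on
      row \<open>r0\<close> is redundant; without it there are fewer conditions than entries in \<open>S\<close>.\<close>
  obtain D :: "'a \<Rightarrow> 'b \<Rightarrow> real" where D: "\<forall>i j. (i, j) \<notin> S \<longrightarrow> D i j = 0" "\<exists>(i, j)\<in>S. D i j \<noteq> 0"
    and rows: "\<forall>i\<in>I - {r0}. (\<Sum>j\<in>J. D i j) = 0" and cols: "\<forall>j\<in>J. (\<Sum>i\<in>I. D i j) = 0"
    using exists_zero_margins_except_one_row[OF assms(1-3) r0]
      card_fst_image_plus_card_snd_image_le[OF \<open>finite S\<close> assms(5,6)] by blast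
  have "r0 \<in> I"
    using r0 assms(3) by auto
  then have r0_sum: "(\<Sum>j\<in>J. D r0 j) = 0"
    by (rule row_sum_zero_if_other_margins_zero[OF \<open>finite I\<close> _ rows cols])
  have "\<forall>i\<in>I. (\<Sum>j\<in>J. D i j) = 0"
  proof
    fix i assume "i \<in> I"
    then show "(\<Sum>j\<in>J. D i j) = 0"
      using rows r0_sum by (cases "i = r0") auto
  qed
  with D cols show ?thesis
    by blast
qed

definition fractional_entries :: "'a set \<Rightarrow> ('a \<Rightarrow> real) \<Rightarrow> 'a set" where
  "fractional_entries P f = {p \<in> P. 0 < f p \<and> f p < 1}"

lemma exists_other_fractional_entry:
  fixes f :: "'a \<Rightarrow> real"
  assumes "finite N" and "\<forall>k\<in>N. 0 \<le> f k \<and> f k \<le> 1" and "sum f N \<in> \<int>"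
    and j: "j \<in> fractional_entries N f"
  shows "\<exists>k\<in>fractional_entries N f. k \<noteq> j"
proof (rule ccontr)
  assume "\<not> ?thesis"
  then have "f k = 0 \<or> f k = 1" if "k \<in> N - {j}" for k
    using that assms(2) by (force simp: fractional_entries_def)
  then have "sum f (N - {j}) \<in> \<int>"
    by (intro Ints_sum) (metis Ints_0 Ints_1)
  moreover have "sum f N = f j + sum f (N - {j})"
    using j \<open>finite N\<close> by (simp add: fractional_entries_def sum.remove)
  ultimately have "f j \<in> \<int>"
    using \<open>sum f N \<in> \<int>\<close> by (metis Ints_diff add_diff_cancel_right')
  then show False
    using j by (auto simp: fractional_entries_def elim!: Ints_cases)
qed

lemma exists_step_to_fewer_fractional_entries:
  fixes M D :: "'a \<Rightarrow> real"
  assumes "finite P" and M01: "\<forall>p\<in>P. 0 \<le> M p \<and> M p \<le> 1"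
    and D_supp: "\<forall>p\<in>P. D p \<noteq> 0 \<longrightarrow> p \<in> fractional_entries P M"
    and "\<exists>p\<in>P. D p \<noteq> 0"
  shows "\<exists>t\<ge>0. (\<forall>p\<in>P. 0 \<le> M p + t * D p \<and> M p + t * D p \<le> 1)
           \<and> fractional_entries P (\<lambda>p. M p + t * D p) \<subset> fractional_entries P M"
proof -
  define T where "T = {p \<in> P. D p \<noteq> 0}"
  \<comment> \<open>the step after which entry \<open>p\<close> of \<open>M + t D\<close> reaches 0 or 1\<close>
  define room where "room p = (if D p > 0 then 1 - M p else M p) / \<bar>D p\<bar>" for p
  define t where "t = Min (room ` T)"
  have "finite T" "T \<noteq> {}"
    using assms by (auto simp: T_def)
  have room_pos: "room p > 0" if "p \<in> T" for p
    using that D_supp by (auto simp: T_def room_def fractional_entries_def)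
  have t_le: "t \<le> room p" if "p \<in> T" for p
    using \<open>finite T\<close> that by (simp add: t_def)
  have "t \<ge> 0"
    using \<open>finite T\<close> \<open>T \<noteq> {}\<close> room_pos by (auto simp: t_def less_imp_le)
  have "t \<in> room ` T"
    unfolding t_def using \<open>finite T\<close> \<open>T \<noteq> {}\<close> by (intro Min_in) auto
  then obtain p0 where p0: "p0 \<in> T" "room p0 = t"
    by blast
  have in_unit: "0 \<le> M p + t * D p \<and> M p + t * D p \<le> 1" if "p \<in> P" for p
  proof (cases "p \<in> T")
    case True
    with t_le[OF True] \<open>t \<ge> 0\<close> M01 that show ?thesis
      using mult_nonneg_nonpos[of t "D p"] mult_nonneg_nonneg[of t "D p"]
      by (auto simp: T_def room_def field_simps split: if_splits)
  next
    case False
    with M01 that show ?thesis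
      by (simp add: T_def)
  qed
  have "M p0 + t * D p0 \<in> {0, 1}"
    using p0 by (auto simp: T_def room_def field_simps split: if_splits)
  then have "p0 \<notin> fractional_entries P (\<lambda>p. M p + t * D p)"
    by (auto simp: fractional_entries_def)
  moreover have "p0 \<in> fractional_entries P M"
    using p0(1) D_supp by (simp add: T_def)
  moreover have "fractional_entries P (\<lambda>p. M p + t * D p) \<subseteq> fractional_entries P M"
    using D_supp by (force simp: fractional_entries_def)
  ultimately show ?thesis
    using \<open>t \<ge> 0\<close> in_unit by blast
qed

definition unit_entries :: "'a set \<Rightarrow> 'b set \<Rightarrow> ('a \<Rightarrow> 'b \<Rightarrow> real) \<Rightarrow> bool" where
  "unit_entries I J M \<longleftrightarrow> (\<forall>i\<in>I. \<forall>j\<in>J. 0 \<le> M i j \<and> M i j \<le> 1)"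

definition integral_margins :: "'a set \<Rightarrow> 'b set \<Rightarrow> ('a \<Rightarrow> 'b \<Rightarrow> real) \<Rightarrow> bool" where
  "integral_margins I J M \<longleftrightarrow> (\<forall>i\<in>I. (\<Sum>j\<in>J. M i j) \<in> \<int>) \<and> (\<forall>j\<in>J. (\<Sum>i\<in>I. M i j) \<in> \<int>)"

definition same_margins ::
    "'a set \<Rightarrow> 'b set \<Rightarrow> ('a \<Rightarrow> 'b \<Rightarrow> real) \<Rightarrow> ('a \<Rightarrow> 'b \<Rightarrow> real) \<Rightarrow> bool" where
  "same_margins I J A B \<longleftrightarrow>
     (\<forall>i\<in>I. (\<Sum>j\<in>J. A i j) = (\<Sum>j\<in>J. B i j)) \<and> (\<forall>j\<in>J. (\<Sum>i\<in>I. A i j) = (\<Sum>i\<in>I. B i j))"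

lemma exists_no_worse_matrix_with_fewer_fractional_entries:
  fixes M w :: "'a \<Rightarrow> 'b \<Rightarrow> real"
  assumes "finite I" and "finite J" and "unit_entries I J M" and "integral_margins I J M"
    and "fractional_entries (I \<times> J) (case_prod M) \<noteq> {}"
  shows "\<exists>M'. unit_entries I J M' \<and> same_margins I J M' M
           \<and> (\<Sum>i\<in>I. \<Sum>j\<in>J. w i j * M i j) \<le> (\<Sum>i\<in>I. \<Sum>j\<in>J. w i j * M' i j)
           \<and> fractional_entries (I \<times> J) (case_prod M') \<subset> fractional_entries (I \<times> J) (case_prod M)"
proof -
  define F where "F = fractional_entries (I \<times> J) (case_prod M)"
  have "F \<subseteq> I \<times> J"
    by (auto simp: F_def fractional_entries_def)
  have row_two: "\<exists>j'. j' \<noteq> j \<and> (i, j') \<in> F" if "(i, j) \<in> F" for i j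
    using exists_other_fractional_entry[OF \<open>finite J\<close>, of "M i" j] that assms(3,4)
    by (auto simp: F_def fractional_entries_def unit_entries_def integral_margins_def)
  have col_two: "\<exists>i'. i' \<noteq> i \<and> (i', j) \<in> F" if "(i, j) \<in> F" for i j
    using exists_other_fractional_entry[OF \<open>finite I\<close>, of "\<lambda>i. M i j" i] that assms(3,4)
    by (auto simp: F_def fractional_entries_def unit_entries_def integral_margins_def)
  obtain D :: "'a \<Rightarrow> 'b \<Rightarrow> real" where D0: "\<forall>i j. (i, j) \<notin> F \<longrightarrow> D i j = 0"
    and D_nz: "\<exists>(i, j)\<in>F. D i j \<noteq> 0"
    and D_rows: "\<forall>i\<in>I. (\<Sum>j\<in>J. D i j) = 0" and D_cols: "\<forall>j\<in>J. (\<Sum>i\<in>I. D i j) = 0"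
    using exists_circulation_on_support[OF \<open>finite I\<close> \<open>finite J\<close> \<open>F \<subseteq> I \<times> J\<close> _ row_two col_two]
      assms(5) by (auto simp: F_def)
  define s :: real where "s = (if 0 \<le> (\<Sum>i\<in>I. \<Sum>j\<in>J. w i j * D i j) then 1 else -1)"
  have "s \<noteq> 0" and gain: "0 \<le> s * (\<Sum>i\<in>I. \<Sum>j\<in>J. w i j * D i j)"
    by (auto simp: s_def)
  obtain t where "t \<ge> 0"
    and unit: "\<forall>p\<in>I \<times> J. 0 \<le> case_prod M p + t * (case p of (i, j) \<Rightarrow> s * D i j)
                  \<and> case_prod M p + t * (case p of (i, j) \<Rightarrow> s * D i j) \<le> 1"
    and fewer: "fractional_entries (I \<times> J) (\<lambda>p. case_prod M p + t * (case p of (i, j) \<Rightarrow> s * D i j)) \<subset> F"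
    using exists_step_to_fewer_fractional_entries[of "I \<times> J" "case_prod M" "\<lambda>(i, j). s * D i j"]
      \<open>finite I\<close> \<open>finite J\<close> assms(3) D0 D_nz \<open>s \<noteq> 0\<close> \<open>F \<subseteq> I \<times> J\<close>
    by (fastforce simp: F_def unit_entries_def)
  define M' where "M' i j = M i j + t * (s * D i j)" for i j
  have "case_prod M' = (\<lambda>p. case_prod M p + t * (case p of (i, j) \<Rightarrow> s * D i j))"
    by (auto simp: M'_def fun_eq_iff)
  then have "fractional_entries (I \<times> J) (case_prod M') \<subset> F"
    using fewer by simp
  moreover have "unit_entries I J M'"
    using unit by (auto simp: unit_entries_def M'_def)
  moreover have "same_margins I J M' M"
    using D_rows D_cols
    by (simp add: same_margins_def M'_def sum.distrib flip: sum_distrib_left)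
  moreover have "(\<Sum>i\<in>I. \<Sum>j\<in>J. w i j * M' i j)
      = (\<Sum>i\<in>I. \<Sum>j\<in>J. w i j * M i j) + t * (s * (\<Sum>i\<in>I. \<Sum>j\<in>J. w i j * D i j))"
    by (simp add: M'_def algebra_simps sum.distrib sum_distrib_left)
  moreover have "0 \<le> t * (s * (\<Sum>i\<in>I. \<Sum>j\<in>J. w i j * D i j))"
    using \<open>t \<ge> 0\<close> gain by simp
  ultimately show ?thesis
    unfolding F_def by (intro exI[of _ M']) auto
qed

lemma exists_no_worse_01_matrix_with_same_margins:
  fixes M w :: "'a \<Rightarrow> 'b \<Rightarrow> real"
  assumes "finite I" and "finite J" and "unit_entries I J M" and "integral_margins I J M"
  shows "\<exists>B. (\<forall>i\<in>I. \<forall>j\<in>J. B i j \<in> {0, 1}) \<and> same_margins I J B M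
           \<and> (\<Sum>i\<in>I. \<Sum>j\<in>J. w i j * M i j) \<le> (\<Sum>i\<in>I. \<Sum>j\<in>J. w i j * B i j)"
  using assms(3,4)
proof (induction "card (fractional_entries (I \<times> J) (case_prod M))" arbitrary: M rule: less_induct)
  case less
  show ?case
  proof (cases "fractional_entries (I \<times> J) (case_prod M) = {}")
    case True
    then have "\<forall>i\<in>I. \<forall>j\<in>J. M i j \<in> {0, 1}"
      using less.prems(1) by (force simp: unit_entries_def fractional_entries_def)
    then show ?thesis
      by (auto simp: same_margins_def)
  next
    case False
    then obtain M' where "unit_entries I J M'" and "same_margins I J M' M"
      and weight: "(\<Sum>i\<in>I. \<Sum>j\<in>J. w i j * M i j) \<le> (\<Sum>i\<in>I. \<Sum>j\<in>J. w i j * M' i j)"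
      and fewer: "fractional_entries (I \<times> J) (case_prod M') \<subset> fractional_entries (I \<times> J) (case_prod M)"
      using exists_no_worse_matrix_with_fewer_fractional_entries[OF assms(1,2) less.prems] by blast
    have "finite (fractional_entries (I \<times> J) (case_prod M))"
      using assms(1,2) by (simp add: fractional_entries_def)
    with fewer have "card (fractional_entries (I \<times> J) (case_prod M'))
        < card (fractional_entries (I \<times> J) (case_prod M))"
      by (rule psubset_card_mono[rotated])
    moreover have "integral_margins I J M'"
      using less.prems(2) \<open>same_margins I J M' M\<close> by (simp add: integral_margins_def same_margins_def)
    ultimately obtain B where "\<forall>i\<in>I. \<forall>j\<in>J. B i j \<in> {0, 1}" and "same_margins I J B M'"
      and "(\<Sum>i\<in>I. \<Sum>j\<in>J. w i j * M' i j) \<le> (\<Sum>i\<in>I. \<Sum>j\<in>J. w i j * B i j)"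
      using less.hyps \<open>unit_entries I J M'\<close> by blast
    with weight \<open>same_margins I J M' M\<close> show ?thesis
      by (intro exI[of _ B]) (auto simp: same_margins_def)
  qed
qed

theorem lemma4p1:
  fixes n :: nat and a :: "nat \<Rightarrow> nat \<Rightarrow> real"
  assumes "n \<ge> 1"
    and "\<And>i j. i \<in> {1..n} \<Longrightarrow> j \<in> {1..n} \<Longrightarrow> 0 \<le> a i j \<and> a i j \<le> 1"
    and "\<And>i. i \<in> {1..n} \<Longrightarrow> \<exists>k::nat. (\<Sum>j\<in>{1..n}. a i j) = real k"
    and "\<And>j. j \<in> {1..n} \<Longrightarrow> \<exists>k::nat. (\<Sum>i\<in>{1..n}. a i j) = real k"
  shows "\<exists>b :: nat \<Rightarrow> nat \<Rightarrow> real.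
           (\<forall>i\<in>{1..n}. \<forall>j\<in>{1..n}. b i j \<in> {0, 1})
         \<and> (\<forall>i\<in>{1..n}. (\<Sum>j\<in>{1..n}. b i j) = (\<Sum>j\<in>{1..n}. a i j))
         \<and> (\<forall>j\<in>{1..n}. (\<Sum>i\<in>{1..n}. b i j) = (\<Sum>i\<in>{1..n}. a i j))
         \<and> (\<Sum>i\<in>{1..n}. \<Sum>j\<in>{1..n}. a i j * b i j)
             \<ge> (\<Sum>i\<in>{1..n}. \<Sum>j\<in>{1..n}. a i j)^2 / (real n)^2"
proof -
  have "unit_entries {1..n} {1..n} a"
    using assms(2) by (simp add: unit_entries_def)
  moreover have "integral_margins {1..n} {1..n} a"
    using assms(3,4) by (metis Ints_of_nat integral_margins_def)
  ultimately obtain b where b01: "\<forall>i\<in>{1..n}. \<forall>j\<in>{1..n}. b i j \<in> {0, 1}"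
    and "same_margins {1..n} {1..n} b a"
    and weight: "(\<Sum>i\<in>{1..n}. \<Sum>j\<in>{1..n}. a i j * a i j) \<le> (\<Sum>i\<in>{1..n}. \<Sum>j\<in>{1..n}. a i j * b i j)"
    using exists_no_worse_01_matrix_with_same_margins[of "{1..n}" "{1..n}" a a] by auto
  have "(\<Sum>i\<in>{1..n}. \<Sum>j\<in>{1..n}. a i j)^2 \<le> (\<Sum>i\<in>{1..n}. \<Sum>j\<in>{1..n}. a i j * a i j) * (real n)^2"
    using sum_squared_le_sum_of_squares[of "case_prod a" "{1..n} \<times> {1..n}"]
    by (simp add: sum.cartesian_product case_prod_beta power2_eq_square)
  then have "(\<Sum>i\<in>{1..n}. \<Sum>j\<in>{1..n}. a i j)^2 / (real n)^2 \<le> (\<Sum>i\<in>{1..n}. \<Sum>j\<in>{1..n}. a i j * a i j)"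
    using assms(1) by (simp add: divide_le_eq)
  with b01 weight \<open>same_margins {1..n} {1..n} b a\<close> show ?thesis
    by (intro exI[of _ b]) (auto simp: same_margins_def)
qed

end
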